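(* Let $q$ be a square-free positive integer and let $k\ge 1$. Suppose $(a,b,2^k)\in T_q$ is primitive and that there is no primitive triple $(x,y,2^j)\in T_q$ with $1\le j<k$. Then for every primitive triple $(x,y,2^r)\in T_q$ with $r\ge k$ there exists $n\in\mathbb Z$ such that $[x,y,2^r]=n\cdot[a,b,2^k]$.
   Context: $T_q$ denotes the set of integer triples $(a,b,c)\in\mathbb Z\times\mathbb Z\times\mathbb Z_{>0}$ with $a^2+qb^2=c^2$; such a triple is primitive if $\gcd(a,b,c)=1$. Two triples $(a,b,c),(A,B,C)\in T_q$ are called equivalent if there exist nonzero integers $m,n$ with $(ma,mb,|m|c)=(nA,nB,|n|C)$; $[a,b,c]$ denotes the equivalence class and $\mathcal P_q$ the set of classes. $\mathcal P_q$ is an abelian group under the well-defined operation $[a,b,c]+[A,B,C]=[aA-qbB,\ aB+bA,\ cC]$, with identity $[1,0,1]$ and inverse $-[a,b,c]=[-a,b,c]$; for $n\in\mathbb Z$, $n\cdot x$ denotes the $n$-th multiple of $x$ in this group. *)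

theory Defs
  imports Main "HOL-Computational_Algebra.Squarefree"
begin

type_synonym triple = "int \<times> int \<times> int"

definition T :: "int \<Rightarrow> triple set" where
  "T q = {(a,b,c). c > 0 \<and> a^2 + q * b^2 = c^2}"

definition primitive :: "triple \<Rightarrow> bool" where
  "primitive t = (case t of (a,b,c) \<Rightarrow> gcd a (gcd b c) = 1)"

text \<open>Equivalence of triples: (a,b,c) ~ (A,B,C) iff there are nonzero m,n with
  (ma, mb, |m|c) = (nA, nB, |n|C).  Equality of classes [t] = [s] in P_q means t ~ s.\<close>
definition tequiv :: "triple \<Rightarrow> triple \<Rightarrow> bool" where
  "tequiv t s = (case t of (a,b,c) \<Rightarrow> case s of (A,B,C) \<Rightarrow>
     (\<exists>m n :: int. m \<noteq> 0 \<and> n \<noteq> 0 \<and>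
        m * a = n * A \<and> m * b = n * B \<and> \<bar>m\<bar> * c = \<bar>n\<bar> * C))"

definition tadd :: "int \<Rightarrow> triple \<Rightarrow> triple \<Rightarrow> triple" where
  "tadd q t s = (case t of (a,b,c) \<Rightarrow> case s of (A,B,C) \<Rightarrow>
     (a*A - q*b*B, a*B + b*A, c*C))"

definition tneg :: "triple \<Rightarrow> triple" where
  "tneg t = (case t of (a,b,c) \<Rightarrow> (-a, b, c))"

fun tnmult :: "int \<Rightarrow> nat \<Rightarrow> triple \<Rightarrow> triple" where
  "tnmult q 0 t = (1, 0, 1)"
| "tnmult q (Suc n) t = tadd q (tnmult q n t) t"

definition tmult :: "int \<Rightarrow> int \<Rightarrow> triple \<Rightarrow> triple" where
  "tmult q n t = (if n \<ge> 0 then tnmult q (nat n) t else tnmult q (nat (-n)) (tneg t))"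

end

theory Submission
  imports Defs Complex_Main
begin

(* A triple (a,b,c) of T_q is sent to the point
     cpoint q (a,b,c) = (a + b sqrt(q) i) / c
   of the complex unit circle.  The group law of P_q becomes multiplication,
   and two triples with positive third entries are equivalent exactly when
   their points agree up to sign.  With w the point of the minimal primitive
   triple (a,b,2^k), it therefore suffices to show that the point of every
   solution (x,y,2^r) lies in {+-w^n}.  This is done by strong induction on r:
   r = 0 gives +-1; if x and y are both even we halve the triple; otherwise the
   triple is primitive, so r >= k by minimality.  For k = 1 one checks directly
   that q = 3 and r = 1.  For k >= 2 a 2-adic argument shows that one of
   z*w, z*conj(w) has its numerators divisible by 2^(2k-1), which yields a
   solution at the smaller level r + 1 - k (the descent step). *)

section \<open>Parity of solutions of x^2 + q y^2 = 4^k\<close>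

lemma odd_square_eq:
  fixes x :: int
  assumes "odd x"
  shows "\<exists>i. x^2 = 8 * i + 1"
proof -
  have "x mod 8 = 1 \<or> x mod 8 = 3 \<or> x mod 8 = 5 \<or> x mod 8 = 7"
    using assms by presburger
  moreover have "x^2 mod 8 = (x mod 8)^2 mod 8" by (simp add: power_mod)
  ultimately have "x^2 mod 8 = 1" by auto
  then show ?thesis using div_mult_mod_eq[of "x^2" 8] by (metis mult.commute)
qed

lemma T_power_of_two_iff [simp]: "(x, y, 2^r) \<in> T q \<longleftrightarrow> x^2 + q * y^2 = (2^r)^2"
  by (simp add: T_def)

lemma primitive_iff [simp]: "primitive (x, y, c) \<longleftrightarrow> gcd x (gcd y c) = 1"
  by (simp add: primitive_def)

lemma primitive_if_odd:
  fixes x y :: int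
  assumes "odd x \<or> odd y"
  shows "primitive (x, y, 2^r)"
proof -
  have "gcd u (gcd v (2^r)) = 1" if "odd u" for u v :: int
  proof -
    have "coprime u (2^r)" using that by simp
    moreover have "gcd u (gcd v (2^r)) dvd gcd u (2^r)"
      by (metis gcd_dvd1 gcd_dvd2 dvd_trans gcd_greatest)
    ultimately show ?thesis by simp
  qed
  then show ?thesis using assms by (metis gcd.left_commute primitive_iff)
qed

lemma primitive_solution_odd:
  fixes q a b :: int and k :: nat
  assumes sf: "squarefree q" and k: "k \<ge> 1"
    and eq: "a^2 + q * b^2 = (2^k)^2" and prim: "primitive (a, b, 2^k)"
  shows "odd a \<and> odd b \<and> q mod 4 = 3"
proof -
  have four_dvd: "(4::int) dvd (2^k)^2"
    using k by (cases k) (auto simp: power2_eq_square)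
  have two_pow: "even ((2::int)^k)" using k by simp
  have not_both_even: "\<not> (even a \<and> even b)"
  proof
    assume "even a \<and> even b"
    then have "2 dvd gcd a (gcd b (2^k))" using two_pow by simp
    with prim show False by simp
  qed
  have odd_a: "odd a"
  proof
    assume "even a"
    then have odd_b: "odd b" using not_both_even by blast
    from \<open>even a\<close> have "2^2 dvd a^2" by (rule dvd_power_same)
    then have "2^2 dvd q * b^2" using four_dvd eq by (metis dvd_add_right_iff numeral_Bit0 power2_eq_square mult_2)
    moreover have "coprime ((2::int)^2) (b^2)"
      unfolding coprime_power_left_iff coprime_power_right_iff
      using odd_b coprime_right_2_iff_odd coprime_commute by blast
    ultimately have "2^2 dvd q" using coprime_dvd_mult_left_iff by blast
    then have "(2::int) dvd 1" using sf squarefreeD by blast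
    then show False by simp
  qed
  have odd_b: "odd b"
  proof
    assume "even b"
    then have "even (a^2)" using eq two_pow by (metis even_add even_mult_iff even_power zero_less_numeral)
    then show False using odd_a by simp
  qed
  obtain i j where i: "a^2 = 8 * i + 1" and j: "b^2 = 8 * j + 1"
    using odd_square_eq odd_a odd_b by blast
  have "a^2 + q * b^2 = (1 + q) + 4 * (2 * i + 2 * q * j)"
    unfolding i j by (simp add: algebra_simps)
  then have "4 dvd 1 + q" using eq four_dvd by (metis dvd_add_left_iff dvd_triv_left)
  then have "q mod 4 = 3" by presburger
  with odd_a odd_b show ?thesis by simp
qed

section \<open>The unit-circle point of a triple\<close>

definition cpoint :: "int \<Rightarrow> triple \<Rightarrow> complex" where
  "cpoint q t = (case t of (a, b, c) \<Rightarrow> Complex (a / c) (b * sqrt q / c))"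

lemma cpoint_tadd:
  assumes "q \<ge> 0" "c \<noteq> 0" "C \<noteq> 0"
  shows "cpoint q (tadd q (a, b, c) (A, B, C)) = cpoint q (a, b, c) * cpoint q (A, B, C)"
proof -
  have "sqrt (real_of_int q) * sqrt (real_of_int q) = q" using assms by simp
  then show ?thesis using assms
    by (simp add: cpoint_def tadd_def complex_eq_iff field_simps)
qed

lemma cpoint_scale: "d \<noteq> 0 \<Longrightarrow> c \<noteq> 0 \<Longrightarrow> cpoint q (d * a, d * b, d * c) = cpoint q (a, b, c)"
  by (simp add: cpoint_def complex_eq_iff)

lemma cpoint_cnj: "cnj (cpoint q (a, b, c)) = cpoint q (a, - b, c)"
  by (simp add: cpoint_def complex_eq_iff)

lemma cpoint_neg: "cpoint q (- a, - b, c) = - cpoint q (a, b, c)"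
  by (simp add: cpoint_def complex_eq_iff)

lemma cpoint_tneg: "cpoint q (tneg (a, b, c)) = - cnj (cpoint q (a, b, c))"
  by (simp add: cpoint_def tneg_def complex_eq_iff)

lemma cpoint_norm:
  assumes "q \<ge> 0" "c > 0" "a^2 + q * b^2 = c^2"
  shows "cpoint q (a, b, c) * cnj (cpoint q (a, b, c)) = 1"
proof -
  have s: "sqrt (real_of_int q)^2 = q" using assms by simp
  have "real_of_int a ^ 2 + real_of_int q * real_of_int b ^ 2 = real_of_int c ^ 2"
    "complex_of_int a ^ 2 + complex_of_int q * complex_of_int b ^ 2 = complex_of_int c ^ 2"
    using assms(3) by (metis of_int_add of_int_mult of_int_power)+
  then show ?thesis
    using assms(2) unfolding cpoint_def complex_mult_cnj
    by (simp add: power_divide power_mult_distrib s) (simp add: field_simps)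
qed

lemma cpoint_cnj_inverse:
  assumes "q \<ge> 0" "c > 0" "a^2 + q * b^2 = c^2"
  shows "cnj (cpoint q (a, b, c)) = inverse (cpoint q (a, b, c))"
  using cpoint_norm[OF assms] by (metis inverse_unique)

lemma cpoint_nonzero:
  assumes "q \<ge> 0" "c > 0" "a^2 + q * b^2 = c^2"
  shows "cpoint q (a, b, c) \<noteq> 0"
  using cpoint_norm[OF assms] by auto

lemma tequiv_if_cpoint_sign:
  assumes q: "q > 0" and c: "c > 0" and C: "C > 0"
    and e: "e = 1 \<or> e = -1" and pt: "cpoint q (a, b, c) = e * cpoint q (A, B, C)"
  shows "tequiv (a, b, c) (A, B, C)"
proof -
  obtain f :: int where f: "e = of_int f" "f = 1 \<or> f = -1"
    using e by (metis of_int_1 of_int_minus)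
  have re: "a / c = f * (A / C)" and im: "b * sqrt q / c = f * (B * sqrt q / C)"
    using pt f by (auto simp: cpoint_def complex_eq_iff)
  have "(b / c) * sqrt q = (f * (B / C)) * sqrt q"
    using im by (metis mult.commute mult.left_commute times_divide_eq_left times_divide_eq_right)
  moreover have "sqrt (real_of_int q) \<noteq> 0" using q by simp
  ultimately have im': "b / c = f * (B / C)" using mult_right_cancel by blast
  have "real_of_int (C * a) = real_of_int (f * c * A)" using re c C by (simp add: field_simps)
  then have "C * a = (f * c) * A" by (simp only: of_int_eq_iff)
  moreover have "real_of_int (C * b) = real_of_int (f * c * B)" using im' c C by (simp add: field_simps)
  then have "C * b = (f * c) * B" by (simp only: of_int_eq_iff)
  moreover have "\<bar>C\<bar> * c = \<bar>f * c\<bar> * C" "C \<noteq> 0" "f * c \<noteq> 0"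
    using f c C by (auto simp: abs_mult)
  ultimately show ?thesis unfolding tequiv_def prod.case by blast
qed

lemma tnmult_pos: "0 < snd (snd t) \<Longrightarrow> 0 < snd (snd (tnmult q n t))"
  by (induction n) (auto simp: tadd_def split: prod.splits)

lemma cpoint_tnmult:
  assumes "q \<ge> 0" "c > 0"
  shows "cpoint q (tnmult q n (a, b, c)) = cpoint q (a, b, c) ^ n"
proof (induction n)
  case 0
  then show ?case by (simp add: cpoint_def complex_eq_iff)
next
  case (Suc n)
  obtain A B C where t: "tnmult q n (a, b, c) = (A, B, C)" by (cases "tnmult q n (a, b, c)")
  have "0 < C" using tnmult_pos[of "(a, b, c)" q n] assms t by simp
  then show ?case using Suc t assms cpoint_tadd[of q C c A B a b] by (simp add: mult.commute)
qed

lemma tmult_pos: "c > 0 \<Longrightarrow> 0 < snd (snd (tmult q n (a, b, c)))"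
  using tnmult_pos by (simp add: tmult_def tneg_def)

lemma cpoint_tmult:
  assumes q: "q > 0" and c: "c > 0" and eq: "a^2 + q * b^2 = c^2"
  shows "\<exists>e. (e = 1 \<or> e = -1) \<and> cpoint q (tmult q n (a, b, c)) = e * cpoint q (a, b, c) powi n"
proof (cases "n \<ge> 0")
  case True
  then have "cpoint q (tmult q n (a, b, c)) = cpoint q (a, b, c) ^ nat n"
    using cpoint_tnmult q c by (simp add: tmult_def)
  then show ?thesis using True by (intro exI[of _ 1]) (simp add: power_int_def)
next
  case False
  define w where "w = cpoint q (a, b, c)"
  define m where "m = nat (- n)"
  have "cpoint q (tmult q n (a, b, c)) = cpoint q (tneg (a, b, c)) ^ m"
    using False cpoint_tnmult q c by (simp add: tmult_def tneg_def m_def)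
  also have "cpoint q (tneg (a, b, c)) = - inverse w"
    using cpoint_cnj_inverse[of q c a b] q c eq unfolding cpoint_tneg w_def by simp
  also have "(- inverse w) ^ m = (-1) ^ m * inverse w ^ m" by (rule power_minus)
  also have "inverse w ^ m = w powi n" using False by (simp add: power_int_def m_def)
  finally have "cpoint q (tmult q n (a, b, c)) = (-1) ^ m * w powi n" .
  moreover have "(-1::complex) ^ m = 1 \<or> (-1::complex) ^ m = -1" by (cases "even m") auto
  ultimately show ?thesis unfolding w_def by blast
qed

definition pm_powers :: "complex \<Rightarrow> complex set" where
  "pm_powers w = {e * w powi n | e n. e = 1 \<or> e = -1}"

lemma sign_in_pm_powers:
  assumes "e = 1 \<or> e = -1"
  shows "e \<in> pm_powers w"
proof -
  have "e = e * w powi 0" by simp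
  then show ?thesis using assms unfolding pm_powers_def by blast
qed

lemma pm_powers_mult_power:
  assumes "z \<in> pm_powers w" "w \<noteq> 0"
  shows "z * w powi m \<in> pm_powers w"
proof -
  obtain e n where e: "e = 1 \<or> e = -1" and z: "z = e * w powi n"
    using assms(1) unfolding pm_powers_def by blast
  have "z * w powi m = e * w powi (n + m)"
    unfolding z using assms(2) by (simp add: power_int_add mult.assoc)
  then show ?thesis using e unfolding pm_powers_def by blast
qed

section \<open>The descent step\<close>

lemma two_power_dvd_factor_aux:
  fixes P M :: int
  assumes "\<not> 4 dvd P" "2^(2*k) dvd P * M" "k \<ge> 1"
  shows "2^(2*k-1) dvd M"
proof (cases "odd P")
  case True
  then have "coprime P (2^(2*k))" by simp
  then have "2^(2*k) dvd M" using assms(2) coprime_dvd_mult_right_iff coprime_commute by blast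
  moreover have "(2::int)^(2*k-1) dvd 2^(2*k)" by (rule le_imp_power_dvd) simp
  ultimately show ?thesis by (rule dvd_trans[rotated])
next
  case False
  then obtain P' where P: "P = 2 * P'" by (auto elim: evenE)
  have odd_P': "odd P'" using assms(1) P by auto
  have "(2::int)^(2*k) = 2 * 2^(2*k-1)" using assms(3) by (cases k) auto
  then have "2^(2*k-1) dvd P' * M" using assms(2) unfolding P by (simp add: mult.assoc)
  moreover have "coprime (2^(2*k-1)) P'" using odd_P' by (simp add: coprime_commute[of _ P'])
  ultimately show ?thesis using coprime_dvd_mult_right_iff by blast
qed

lemma two_power_dvd_factor:
  fixes P M :: int
  assumes "\<not> 4 dvd P + M" "2^(2*k) dvd P * M" "k \<ge> 1"
  shows "2^(2*k-1) dvd P \<or> 2^(2*k-1) dvd M"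
proof (cases "4 dvd P")
  case True
  then have "\<not> 4 dvd M" using assms(1) by auto
  then show ?thesis using two_power_dvd_factor_aux[of M k P] assms by (simp add: mult.commute)
next
  case False
  then show ?thesis using two_power_dvd_factor_aux[of P k M] assms by simp
qed

lemma descent_product:
  fixes q x y a b :: int and r k N s :: nat
  assumes q: "q \<ge> 0" and xy: "x^2 + q * y^2 = (2^r)^2" and ab: "a^2 + q * b^2 = (2^k)^2"
    and odd_a: "odd a" and N: "N \<le> 2 * k" and levels: "r + k = N + s"
    and dvd: "2^N dvd x * a - q * y * b"
  shows "\<exists>u v. u^2 + q * v^2 = (2^s)^2 \<and>
           cpoint q (x, y, 2^r) * cpoint q (a, b, 2^k) = cpoint q (u, v, 2^s)"
proof -
  define A where "A = x * a - q * y * b"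
  define B where "B = x * b + y * a"
  have "(2::int)^N dvd (2^k)^2"
    using N by (simp add: power_mult[symmetric] mult.commute le_imp_power_dvd)
  moreover have "a * B = b * A + y * (a^2 + q * b^2)"
    unfolding A_def B_def by (simp add: power2_eq_square algebra_simps)
  ultimately have "2^N dvd a * B" using dvd ab unfolding A_def by simp
  moreover have "coprime a (2^N)" using odd_a by simp
  ultimately have "2^N dvd B" using coprime_dvd_mult_right_iff coprime_commute by blast
  then obtain u v where u: "A = 2^N * u" and v: "B = 2^N * v"
    using dvd unfolding A_def by blast
  have pow: "(2::int)^r * 2^k = 2^N * 2^s" using levels by (simp flip: power_add)
  have "A^2 + q * B^2 = (x^2 + q * y^2) * (a^2 + q * b^2)"
    unfolding A_def B_def by (simp add: power2_eq_square algebra_simps)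
  also have "\<dots> = (2^N)^2 * (2^s)^2" unfolding xy ab by (metis pow power_mult_distrib)
  finally have "(2^N)^2 * (u^2 + q * v^2) = (2^N)^2 * (2^s)^2"
    unfolding u v by (simp add: power_mult_distrib algebra_simps)
  then have uv: "u^2 + q * v^2 = (2^s)^2" by simp
  have "cpoint q (x, y, 2^r) * cpoint q (a, b, 2^k) = cpoint q (tadd q (x, y, 2^r) (a, b, 2^k))"
    using q by (simp add: cpoint_tadd)
  also have "\<dots> = cpoint q (2^N * u, 2^N * v, 2^N * 2^s)"
    unfolding tadd_def pow[symmetric] u[symmetric] v[symmetric] A_def B_def
    by (simp add: algebra_simps)
  also have "\<dots> = cpoint q (u, v, 2^s)" by (rule cpoint_scale) auto
  finally show ?thesis using uv by blast
qed

lemma descent_step: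
  fixes q x y a b :: int and r k :: nat
  defines "w \<equiv> cpoint q (a, b, 2^k)"
  assumes q: "q > 0" and xy: "x^2 + q * y^2 = (2^r)^2" and ab: "a^2 + q * b^2 = (2^k)^2"
    and odd_a: "odd a" and odd_x: "odd x" and k: "k \<ge> 1" and rk: "r \<ge> k"
  shows "\<exists>u v e. u^2 + q * v^2 = (2^(r + 1 - k))^2 \<and> (e = 1 \<or> e = -1) \<and>
           cpoint q (x, y, 2^r) = cpoint q (u, v, 2^(r + 1 - k)) * w powi e"
proof -
  define P where "P = x * a + q * y * b"
  define M where "M = x * a - q * y * b"
  have q0: "q \<ge> 0" using q by simp
  have norm: "w * cnj w = 1" unfolding w_def using cpoint_norm q ab by simp
  have N: "2 * k - 1 \<le> 2 * k" by simp
  have levels: "r + k = (2 * k - 1) + (r + 1 - k)" using k rk by simp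
  have "P * M = (x^2 + q * y^2) * a^2 - q * y^2 * (a^2 + q * b^2)"
    unfolding P_def M_def by (simp add: power2_eq_square algebra_simps)
  also have "\<dots> = 2^(2*r) * a^2 - 2^(2*k) * (q * y^2)"
    unfolding xy ab by (simp add: power_mult[symmetric] mult.commute)
  finally have "2^(2*k) dvd P * M"
    using le_imp_power_dvd[of "2*k" "2*r" "2::int"] rk by simp
  moreover have "\<not> 4 dvd P + M"
  proof -
    have "odd (x * a)" using odd_x odd_a by simp
    then obtain t where "x * a = 2 * t + 1" by (rule oddE)
    then have "P + M = 4 * t + 2" unfolding P_def M_def by simp
    then show ?thesis by presburger
  qed
  ultimately consider "2^(2*k-1) dvd M" | "2^(2*k-1) dvd P"
    using two_power_dvd_factor k by blast
  then show ?thesis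
  proof cases
    case 1
    then have "2^(2*k-1) dvd x * a - q * y * b" unfolding M_def .
    from descent_product[OF q0 xy ab odd_a N levels this]
    obtain u v where uv: "u^2 + q * v^2 = (2^(r + 1 - k))^2"
      and prod: "cpoint q (x, y, 2^r) * w = cpoint q (u, v, 2^(r + 1 - k))"
      unfolding w_def by blast
    have "cpoint q (x, y, 2^r) = cpoint q (x, y, 2^r) * w * cnj w"
      using norm by (simp add: mult.assoc)
    also have "\<dots> = cpoint q (u, v, 2^(r + 1 - k)) * w powi (-1)"
      using prod cpoint_cnj_inverse[of q "2^k" a b] q0 ab unfolding w_def by simp
    finally show ?thesis using uv by blast
  next
    case 2
    have ab': "a^2 + q * (- b)^2 = (2^k)^2" using ab by simp
    have "2^(2*k-1) dvd x * a - q * y * (- b)" using 2 unfolding P_def by simp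
    from descent_product[OF q0 xy ab' odd_a N levels this]
    obtain u v where uv: "u^2 + q * v^2 = (2^(r + 1 - k))^2"
      and prod: "cpoint q (x, y, 2^r) * cnj w = cpoint q (u, v, 2^(r + 1 - k))"
      unfolding w_def cpoint_cnj by blast
    have "cpoint q (x, y, 2^r) = cpoint q (x, y, 2^r) * cnj w * w"
      using norm by (simp add: mult.assoc mult.commute)
    also have "\<dots> = cpoint q (u, v, 2^(r + 1 - k)) * w powi 1" using prod by simp
    finally show ?thesis using uv by blast
  qed
qed

section \<open>Solutions at small levels\<close>

lemma level_zero_solution:
  fixes q x y :: int
  assumes q: "q \<ge> 2" and eq: "x^2 + q * y^2 = 1"
  shows "y = 0 \<and> (x = 1 \<or> x = -1)"
proof -
  have y: "y = 0"
  proof (rule ccontr)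
    assume "y \<noteq> 0"
    then have "1 \<le> y^2" by (simp add: int_one_le_iff_zero_less)
    then have "2 * 1 \<le> q * y^2" using q by (intro mult_mono) auto
    moreover have "0 \<le> x^2" by simp
    ultimately show False using eq by linarith
  qed
  then have "x^2 = 1" using eq by simp
  then show ?thesis using y by (simp add: power2_eq_1_iff)
qed

lemma even_solution_halve:
  fixes q x y :: int and r :: nat
  assumes r: "r > 0" and ev: "even x" "even y" and eq: "x^2 + q * y^2 = (2^r)^2"
  shows "\<exists>x' y'. x'^2 + q * y'^2 = (2^(r - 1))^2 \<and> cpoint q (x, y, 2^r) = cpoint q (x', y', 2^(r - 1))"
proof -
  obtain x' y' where x: "x = 2 * x'" and y: "y = 2 * y'" using ev by (auto elim!: evenE)
  have pow: "(2::int)^r = 2 * 2^(r - 1)" using r by (cases r) auto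
  have "4 * (x'^2 + q * y'^2) = 4 * (2^(r - 1))^2"
    using eq unfolding x y pow by (simp add: power2_eq_square algebra_simps)
  then have "x'^2 + q * y'^2 = (2^(r - 1))^2" by simp
  moreover have "cpoint q (x, y, 2^r) = cpoint q (x', y', 2^(r - 1))"
    unfolding x y pow by (rule cpoint_scale) auto
  ultimately show ?thesis by auto
qed

text \<open>If the minimal level is k = 1, then q = 3 and every odd solution lies at
  level 1 with entries +-1, so its point is +-w or +-w^-1.\<close>
lemma level_one_case:
  fixes q a b x y :: int and r :: nat
  assumes q: "q > 0" and ab: "a^2 + q * b^2 = 4" and xy: "x^2 + q * y^2 = (2^r)^2"
    and odd: "odd a" "odd b" "odd x" "odd y" and r: "r \<ge> 1"
  shows "cpoint q (x, y, 2^r) \<in> pm_powers (cpoint q (a, b, 2))"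
proof -
  obtain ia ib ix iy where ia: "a^2 = 8 * ia + 1" and ib: "b^2 = 8 * ib + 1"
    and ix: "x^2 = 8 * ix + 1" and iy: "y^2 = 8 * iy + 1"
    using odd odd_square_eq by metis
  have pos: "1 \<le> a^2" "1 \<le> b^2" "1 \<le> x^2" "1 \<le> y^2"
    using odd by (auto simp: int_one_le_iff_zero_less)
  have "1 * b^2 \<le> q * b^2" "q * 1 \<le> q * b^2"
    using q pos by (intro mult_right_mono mult_left_mono; simp)+
  then have "ib = 0" "ia = 0" using ab ia ib pos by linarith+
  then have q3: "q = 3" and a1: "a^2 = 1" and b1: "b^2 = 1" using ab ia ib by simp_all
  have r1: "r = 1"
  proof (rule ccontr)
    assume "r \<noteq> 1"
    then have "((2::int)^r)^2 = 8 * (2 * (2^(r - 2))^2)"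
      using r by (cases r; cases "r - 1") (auto simp: power2_eq_square)
    moreover have "x^2 + q * y^2 = 8 * (ix + 3 * iy) + 4" using ix iy q3 by simp
    moreover have "\<And>K L :: int. 8 * K \<noteq> 8 * L + 4" by presburger
    ultimately show False using xy by metis
  qed
  have "x^2 = 1" "y^2 = 1" using xy r1 q3 pos by simp_all
  then have x: "x = a \<or> x = - a" and y: "y = b \<or> y = - b"
    using a1 b1 by (metis power2_eq_iff)+
  define w where "w = cpoint q (a, b, 2)"
  have inv: "cpoint q (a, - b, 2) = w powi (-1)"
    using cpoint_cnj_inverse[of q 2 a b] q ab unfolding w_def cpoint_cnj by simp
  have "\<exists>e n. (e = 1 \<or> e = -1) \<and> cpoint q (x, y, 2) = e * w powi n"
    using x y
  proof (elim disjE)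
    assume "x = a" "y = b"
    then show ?thesis unfolding w_def by (intro exI[of _ 1] exI[of _ 1]) simp
  next
    assume "x = - a" "y = - b"
    then show ?thesis unfolding w_def by (intro exI[of _ "-1"] exI[of _ 1]) (simp add: cpoint_neg)
  next
    assume "x = a" "y = - b"
    then show ?thesis using inv by (intro exI[of _ 1] exI[of _ "-1"]) simp
  next
    assume "x = - a" "y = b"
    then have "cpoint q (x, y, 2) = - cpoint q (a, - b, 2)" using cpoint_neg[of q a "- b" 2] by simp
    then show ?thesis using inv by (intro exI[of _ "-1"] exI[of _ "-1"]) simp
  qed
  then show ?thesis unfolding r1 w_def pm_powers_def by auto
qed

lemma cpoint_in_pm_powers:
  fixes q a b :: int and k r :: nat
  assumes q: "q > 0" and sf: "squarefree q" and k: "k \<ge> 1"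
    and ab: "(a, b, 2^k) \<in> T q" and prim: "primitive (a, b, 2^k)"
    and minimal: "\<not> (\<exists>x y :: int. \<exists>j :: nat. 1 \<le> j \<and> j < k \<and>
                      (x, y, 2^j) \<in> T q \<and> primitive (x, y, 2^j))"
  shows "(x, y, 2^r) \<in> T q \<Longrightarrow> cpoint q (x, y, 2^r) \<in> pm_powers (cpoint q (a, b, 2^k))"
proof (induction r arbitrary: x y rule: less_induct)
  case (less r x y)
  define w where "w = cpoint q (a, b, 2^k)"
  have ab': "a^2 + q * b^2 = (2^k)^2" using ab by simp
  have xy: "x^2 + q * y^2 = (2^r)^2" using less.prems by simp
  from primitive_solution_odd[OF sf k ab' prim]
  have odd_a: "odd a" and odd_b: "odd b" and q_mod: "q mod 4 = 3" by auto
  have w0: "w \<noteq> 0" unfolding w_def using cpoint_nonzero q ab' by simp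
  consider "r = 0" | "r > 0" "even x" "even y" | "r > 0" "odd x \<or> odd y" by auto
  then show ?case
  proof cases
    case 1
    have "q \<ge> 2" using q q_mod by presburger
    then have "y = 0 \<and> (x = 1 \<or> x = -1)" using level_zero_solution xy 1 by simp
    then have "cpoint q (x, y, 2^r) = 1 \<or> cpoint q (x, y, 2^r) = -1"
      using 1 by (auto simp: cpoint_def complex_eq_iff)
    then show ?thesis using sign_in_pm_powers by blast
  next
    case 2
    then obtain x' y' where "x'^2 + q * y'^2 = (2^(r - 1))^2"
      and "cpoint q (x, y, 2^r) = cpoint q (x', y', 2^(r - 1))"
      using even_solution_halve xy by blast
    then show ?thesis using less.IH[of "r - 1" x' y'] 2 by simp
  next
    case 3
    have prim_xy: "primitive (x, y, 2^r)" using primitive_if_odd 3 by blast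
    have rk: "r \<ge> k"
    proof (rule ccontr)
      assume "\<not> r \<ge> k"
      then show False using minimal less.prems prim_xy 3(1) by auto
    qed
    from primitive_solution_odd[OF sf _ xy prim_xy] 3(1)
    have odd_x: "odd x" and odd_y: "odd y" by auto
    show ?thesis
    proof (cases "k = 1")
      case True
      then show ?thesis using level_one_case[OF q _ xy odd_a odd_b odd_x odd_y] ab' rk by simp
    next
      case False
      obtain u v e where uv: "u^2 + q * v^2 = (2^(r + 1 - k))^2"
        and z: "cpoint q (x, y, 2^r) = cpoint q (u, v, 2^(r + 1 - k)) * w powi e"
        using descent_step[OF q xy ab' odd_a odd_x k rk] unfolding w_def by blast
      have "r + 1 - k < r" using False k rk by simp
      then have "cpoint q (u, v, 2^(r + 1 - k)) \<in> pm_powers w"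
        using less.IH uv unfolding w_def by simp
      then show ?thesis unfolding z w_def[symmetric] using pm_powers_mult_power w0 by blast
    qed
  qed
qed

theorem theorem3:
  fixes q a b :: int and k :: nat
  assumes "q > 0" and "squarefree q" and "k \<ge> 1"
    and "(a, b, 2^k) \<in> T q" and "primitive (a, b, 2^k)"
    and "\<not> (\<exists>x y :: int. \<exists>j :: nat. 1 \<le> j \<and> j < k \<and>
            (x, y, 2^j) \<in> T q \<and> primitive (x, y, 2^j))"
  shows "\<forall>x y :: int. \<forall>r :: nat. r \<ge> k \<and> (x, y, 2^r) \<in> T q \<and> primitive (x, y, 2^r)
           \<longrightarrow> (\<exists>n :: int. tequiv (x, y, 2^r) (tmult q n (a, b, 2^k)))"
proof (intro allI impI)
  fix x y :: int and r :: nat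
  assume xy: "r \<ge> k \<and> (x, y, 2^r) \<in> T q \<and> primitive (x, y, 2^r)"
  define w where "w = cpoint q (a, b, 2^k)"
  have ab: "a^2 + q * b^2 = (2^k)^2" using assms(4) by simp
  have "cpoint q (x, y, 2^r) \<in> pm_powers w"
    using cpoint_in_pm_powers[OF assms] xy unfolding w_def by blast
  then obtain e n where e: "e = 1 \<or> e = -1" and z: "cpoint q (x, y, 2^r) = e * w powi n"
    unfolding pm_powers_def by blast
  obtain A B D where t: "tmult q n (a, b, 2^k) = (A, B, D)" by (cases "tmult q n (a, b, 2^k)")
  obtain f where f: "f = 1 \<or> f = -1" and ft: "cpoint q (A, B, D) = f * w powi n"
    using cpoint_tmult[OF assms(1) _ ab, of n] t unfolding w_def by auto
  have D: "D > 0" using tmult_pos[of "2^k" q n a b] t by simp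
  have "cpoint q (x, y, 2^r) = (e * f) * cpoint q (A, B, D)" and "e * f = 1 \<or> e * f = -1"
    using z ft e f by auto
  then have "tequiv (x, y, 2^r) (A, B, D)" using tequiv_if_cpoint_sign assms(1) D by simp
  then have "tequiv (x, y, 2^r) (tmult q n (a, b, 2^k))" unfolding t .
  then show "\<exists>n. tequiv (x, y, 2^r) (tmult q n (a, b, 2^k))" by blast
qed

end
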